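(* Let $A$ be a finite set with $N\ge 2$ elements and let $(v_{xy})$ be a Llull matrix on $A$ with CLC structure that is not identically zero. Let $\xi$ be any admissible order, let $\rho_x=\frac{1}{N-1}\sum_{y\neq x}v_{xy}$ be the mean preference scores, and let $X$ be the top dominant irreducible component of $A$. Then for all distinct $x,y\in A$: (a) if $x<_\xi y$ then $\rho_x\ge\rho_y$; (b) $\rho_x=\rho_y$ if and only if $v_{xy}=v_{yx}$; (c) if $\rho_x\ge\rho_y$ then $v_{xy}\ge v_{yx}$, and $v_{xz}\ge v_{yz}$ and $v_{zx}\le v_{zy}$ for every $z\notin\{x,y\}$; (d) $\rho_x>\rho_y$ if and only if $v_{xy}>v_{yx}$; (e) if $v_{xy}>v_{yx}$ then $x<_\xi y$; (f) $\rho_x>\rho_y$ whenever $x\in X$ and $y\notin X$.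
   Context: A Llull matrix on a finite set $A$ is an assignment to each ordered pair of distinct elements $x\neq y$ of $A$ of a number $v_{xy}\in[0,1]$ such that $v_{xy}+v_{yx}\le 1$. Turnouts: $t_{xy}=v_{xy}+v_{yx}$; margins: $m_{xy}=v_{xy}-v_{yx}$. The matrix has CLC structure if there is a total order $\xi$ on $A$ (an admissible order) such that, writing $x<_\xi y$ when $x$ precedes $y$ and $x'$ for the immediate successor of $x$ in $\xi$ (when it exists): (i) $v_{xy}\ge v_{yx}$ whenever $x<_\xi y$; (ii) $v_{xz}=\max(v_{xy},v_{yz})$ whenever $x<_\xi y<_\xi z$; (iii) $v_{zx}=\min(v_{zy},v_{yx})$ whenever $x<_\xi y<_\xi z$; (iv) $0\le t_{xz}-t_{x'z}\le m_{xx'}$ whenever $x'$ exists and $z\notin\{x,x'\}$. Indirect scores: for $x\neq y$, $\hat v_{xy}=\max$ over all paths $x=x_0,\dots,x_n=y$ of $\min_{0\le i<n} v_{x_ix_{i+1}}$. Irreducible components are the classes of the equivalence relation $x\sim y$ iff $x=y$ or ($\hat v_{xy}>0$ and $\hat v_{yx}>0$). $x$ dominates $y$ iff $\hat v_{xy}>0$ and $\hat v_{yx}=0$; this passes to components. A top dominant irreducible component is an irreducible component dominating every other one; for a non-vanishing Llull matrix with CLC structure such a component exists (and is unique). *)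

theory Defs
  imports Complex_Main
begin

text \<open>A Llull matrix on A: only the values v x y for distinct x, y in A matter.\<close>
definition llull_matrix :: "'a set \<Rightarrow> ('a \<Rightarrow> 'a \<Rightarrow> real) \<Rightarrow> bool" where
  "llull_matrix A v \<longleftrightarrow>
     (\<forall>x\<in>A. \<forall>y\<in>A. x \<noteq> y \<longrightarrow> 0 \<le> v x y \<and> v x y \<le> 1 \<and> v x y + v y x \<le> 1)"

definition turnout :: "('a \<Rightarrow> 'a \<Rightarrow> real) \<Rightarrow> 'a \<Rightarrow> 'a \<Rightarrow> real" where
  "turnout v x y = v x y + v y x"

definition margin :: "('a \<Rightarrow> 'a \<Rightarrow> real) \<Rightarrow> 'a \<Rightarrow> 'a \<Rightarrow> real" where
  "margin v x y = v x y - v y x"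

text \<open>A total order on A is represented by a list enumerating A without repetitions.\<close>
definition prec :: "'a list \<Rightarrow> 'a \<Rightarrow> 'a \<Rightarrow> bool" where
  "prec xs x y \<longleftrightarrow> (\<exists>i j. i < j \<and> j < length xs \<and> xs ! i = x \<and> xs ! j = y)"

definition succ :: "'a list \<Rightarrow> 'a \<Rightarrow> 'a \<Rightarrow> bool" where
  "succ xs x x' \<longleftrightarrow> (\<exists>i. Suc i < length xs \<and> xs ! i = x \<and> xs ! Suc i = x')"

definition admissible_order :: "'a set \<Rightarrow> ('a \<Rightarrow> 'a \<Rightarrow> real) \<Rightarrow> 'a list \<Rightarrow> bool" where
  "admissible_order A v xs \<longleftrightarrow>
     distinct xs \<and> set xs = A \<and>
     (\<forall>x y. prec xs x y \<longrightarrow> v x y \<ge> v y x) \<and>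
     (\<forall>x y z. prec xs x y \<and> prec xs y z \<longrightarrow> v x z = max (v x y) (v y z)) \<and>
     (\<forall>x y z. prec xs x y \<and> prec xs y z \<longrightarrow> v z x = min (v z y) (v y x)) \<and>
     (\<forall>x x' z. succ xs x x' \<and> z \<in> A \<and> z \<notin> {x, x'} \<longrightarrow>
        0 \<le> turnout v x z - turnout v x' z \<and> turnout v x z - turnout v x' z \<le> margin v x x')"

definition has_CLC :: "'a set \<Rightarrow> ('a \<Rightarrow> 'a \<Rightarrow> real) \<Rightarrow> bool" where
  "has_CLC A v \<longleftrightarrow> (\<exists>xs. admissible_order A v xs)"

definition paths :: "'a set \<Rightarrow> 'a \<Rightarrow> 'a \<Rightarrow> 'a list set" where
  "paths A x y = {ps. 2 \<le> length ps \<and> hd ps = x \<and> last ps = y \<and> set ps \<subseteq> A \<and>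
                      (\<forall>i. Suc i < length ps \<longrightarrow> ps ! i \<noteq> ps ! Suc i)}"

definition path_min :: "('a \<Rightarrow> 'a \<Rightarrow> real) \<Rightarrow> 'a list \<Rightarrow> real" where
  "path_min v ps = Min {v (ps ! i) (ps ! Suc i) | i. Suc i < length ps}"

definition indirect :: "'a set \<Rightarrow> ('a \<Rightarrow> 'a \<Rightarrow> real) \<Rightarrow> 'a \<Rightarrow> 'a \<Rightarrow> real" where
  "indirect A v x y = Max (path_min v ` paths A x y)"

definition irred_rel :: "'a set \<Rightarrow> ('a \<Rightarrow> 'a \<Rightarrow> real) \<Rightarrow> 'a rel" where
  "irred_rel A v = {(x, y). x \<in> A \<and> y \<in> A \<and>
      (x = y \<or> (indirect A v x y > 0 \<and> indirect A v y x > 0))}"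

definition irred_components :: "'a set \<Rightarrow> ('a \<Rightarrow> 'a \<Rightarrow> real) \<Rightarrow> 'a set set" where
  "irred_components A v = A // irred_rel A v"

definition dominates :: "'a set \<Rightarrow> ('a \<Rightarrow> 'a \<Rightarrow> real) \<Rightarrow> 'a \<Rightarrow> 'a \<Rightarrow> bool" where
  "dominates A v x y \<longleftrightarrow> indirect A v x y > 0 \<and> indirect A v y x = 0"

definition comp_dominates :: "'a set \<Rightarrow> ('a \<Rightarrow> 'a \<Rightarrow> real) \<Rightarrow> 'a set \<Rightarrow> 'a set \<Rightarrow> bool" where
  "comp_dominates A v X Y \<longleftrightarrow> (\<forall>x\<in>X. \<forall>y\<in>Y. dominates A v x y)"

definition top_dominant_component :: "'a set \<Rightarrow> ('a \<Rightarrow> 'a \<Rightarrow> real) \<Rightarrow> 'a set \<Rightarrow> bool" where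
  "top_dominant_component A v X \<longleftrightarrow> X \<in> irred_components A v \<and>
     (\<forall>Y\<in>irred_components A v. Y \<noteq> X \<longrightarrow> comp_dominates A v X Y)"

definition mean_score :: "'a set \<Rightarrow> ('a \<Rightarrow> 'a \<Rightarrow> real) \<Rightarrow> 'a \<Rightarrow> real" where
  "mean_score A v x = (1 / (real (card A) - 1)) * (\<Sum>y\<in>A - {x}. v x y)"

end

theory Submission
  imports Defs "HOL-Combinatorics.Transposition"
begin

text \<open>
  Along an admissible order rows decrease and columns increase: if \<open>x\<close> precedes \<open>y\<close> then
  \<open>v y z \<le> v x z\<close> and \<open>v z x \<le> v z y\<close> for every other \<open>z\<close>. Between neighbours this follows
  from the max/min rules (ii), (iii); the turnout condition (iv) is needed only to step over \<open>z\<close>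
  itself. The same rules show that a tie \<open>v x y = v y x\<close> makes \<open>x\<close> and \<open>y\<close> twins, i.e. their rows
  and columns agree outside \<open>{x, y}\<close>. So the difference of the row sums of \<open>x\<close> and \<open>y\<close> is
  \<open>v x y - v y x\<close> plus terms of the same sign, and all comparisons of mean scores reduce to
  comparing \<open>v x y\<close> with \<open>v y x\<close>. For (f), if \<open>x\<close> dominates \<open>y\<close> then \<open>v y x\<close> is bounded by the
  indirect score \<open>0\<close>; were also \<open>v x y = 0\<close>, swapping the twins \<open>x\<close> and \<open>y\<close> would be an
  automorphism of the matrix and the indirect scores from \<open>x\<close> to \<open>y\<close> and back would agree.
\<close>

definition row_sum :: "'a set \<Rightarrow> ('a \<Rightarrow> 'a \<Rightarrow> real) \<Rightarrow> 'a \<Rightarrow> real" where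
  "row_sum A v x = (\<Sum>y\<in>A - {x}. v x y)"

lemma mean_score_less_iff:
  assumes "card A \<ge> 2"
  shows "mean_score A v x < mean_score A v y \<longleftrightarrow> row_sum A v x < row_sum A v y"
proof -
  have "1 / (real (card A) - 1) > 0" using assms by simp
  then show ?thesis unfolding mean_score_def row_sum_def by (rule mult_less_cancel_left_pos)
qed

lemma row_sum_diff:
  assumes "finite A" "x \<in> A" "y \<in> A" "x \<noteq> y"
  shows "row_sum A v x - row_sum A v y = (v x y - v y x) + (\<Sum>z\<in>A - {x, y}. v x z - v y z)"
proof -
  define B where "B = A - {x, y}"
  have "A - {x} = insert y B" "A - {y} = insert x B" "finite B" "x \<notin> B" "y \<notin> B"
    using assms by (auto simp: B_def)
  then show ?thesis
    unfolding row_sum_def B_def[symmetric] by (simp add: sum_subtractf)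
qed

section \<open>Paths and indirect scores\<close>

lemma path_min_attained:
  assumes "ps \<in> paths A a b"
  obtains i where "Suc i < length ps" "path_min v ps = v (ps ! i) (ps ! Suc i)"
proof -
  have "finite {v (ps ! i) (ps ! Suc i) | i. Suc i < length ps}"
    by (rule finite_image_set, rule finite_subset[of _ "{..<length ps}"]) auto
  moreover have "{v (ps ! i) (ps ! Suc i) | i. Suc i < length ps} \<noteq> {}"
    using assms unfolding paths_def by (auto intro!: exI[of _ 0])
  ultimately have "path_min v ps \<in> {v (ps ! i) (ps ! Suc i) | i. Suc i < length ps}"
    unfolding path_min_def by (rule Min_in)
  with that show ?thesis by blast
qed

lemma finite_path_mins:
  assumes "finite A"
  shows "finite (path_min v ` paths A a b)"
proof (rule finite_subset)
  show "path_min v ` paths A a b \<subseteq> (\<lambda>(p, q). v p q) ` (A \<times> A)"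
  proof
    fix u assume "u \<in> path_min v ` paths A a b"
    then obtain ps where ps: "ps \<in> paths A a b" "u = path_min v ps" by blast
    obtain i where i: "Suc i < length ps" "path_min v ps = v (ps ! i) (ps ! Suc i)"
      using ps(1) by (rule path_min_attained)
    have "(ps ! i, ps ! Suc i) \<in> A \<times> A"
      using ps(1) i(1) nth_mem[of i ps] nth_mem[of "Suc i" ps] unfolding paths_def by auto
    then show "u \<in> (\<lambda>(p, q). v p q) ` (A \<times> A)"
      using i(2) ps(2) by (auto intro: rev_image_eqI)
  qed
qed (use assms in simp)

lemma path_min_le_indirect:
  "finite A \<Longrightarrow> ps \<in> paths A a b \<Longrightarrow> path_min v ps \<le> indirect A v a b"
  unfolding indirect_def by (intro Max_ge finite_path_mins) auto

lemma edge_in_paths: "a \<in> A \<Longrightarrow> b \<in> A \<Longrightarrow> a \<noteq> b \<Longrightarrow> [a, b] \<in> paths A a b"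
  unfolding paths_def by (auto simp: less_Suc_eq)

lemma le_indirect:
  assumes "finite A" "a \<in> A" "b \<in> A" "a \<noteq> b"
  shows "v a b \<le> indirect A v a b"
proof -
  have "path_min v [a, b] = v a b"
    unfolding path_min_def by simp
  then show ?thesis
    using path_min_le_indirect[OF assms(1) edge_in_paths[OF assms(2-4)], of v] by simp
qed

lemma indirect_attained:
  assumes "finite A" "a \<in> A" "b \<in> A" "a \<noteq> b"
  obtains ps where "ps \<in> paths A a b" "path_min v ps = indirect A v a b"
proof -
  have "indirect A v a b \<in> path_min v ` paths A a b"
    unfolding indirect_def using edge_in_paths[OF assms(2-4)]
    by (intro Max_in finite_path_mins assms(1)) blast
  with that show ?thesis by (metis imageE)
qed

lemma map_paths:
  assumes ps: "ps \<in> paths A a b"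
    and \<sigma>: "inj_on \<sigma> A" "\<sigma> ` A \<subseteq> A"
    and v: "\<And>p q. p \<in> A \<Longrightarrow> q \<in> A \<Longrightarrow> p \<noteq> q \<Longrightarrow> v (\<sigma> p) (\<sigma> q) = v p q"
  shows "map \<sigma> ps \<in> paths A (\<sigma> a) (\<sigma> b)" and "path_min v (map \<sigma> ps) = path_min v ps"
proof -
  have ps_props: "2 \<le> length ps" "hd ps = a" "last ps = b" "set ps \<subseteq> A"
    "\<And>i. Suc i < length ps \<Longrightarrow> ps ! i \<noteq> ps ! Suc i"
    using ps unfolding paths_def by auto
  have edge: "ps ! i \<in> A" "ps ! Suc i \<in> A" if "Suc i < length ps" for i
    using that ps_props(4) nth_mem[of i ps] nth_mem[of "Suc i" ps] by auto
  have "ps \<noteq> []" using ps_props(1) by auto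
  moreover have "map \<sigma> ps ! i \<noteq> map \<sigma> ps ! Suc i" if "Suc i < length ps" for i
    using that ps_props(5) edge inj_onD[OF \<sigma>(1)] by fastforce
  ultimately show "map \<sigma> ps \<in> paths A (\<sigma> a) (\<sigma> b)"
    using ps_props(1-4) \<sigma>(2) unfolding paths_def by (auto simp: hd_map last_map)
  have "v (map \<sigma> ps ! i) (map \<sigma> ps ! Suc i) = v (ps ! i) (ps ! Suc i)"
    if "Suc i < length ps" for i
    using that edge ps_props(5) v by simp
  then show "path_min v (map \<sigma> ps) = path_min v ps"
    unfolding path_min_def by (metis (no_types, lifting) length_map)
qed

lemma indirect_le_map:
  assumes "finite A" "a \<in> A" "b \<in> A" "a \<noteq> b"
    and "inj_on \<sigma> A" "\<sigma> ` A \<subseteq> A"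
    and "\<And>p q. p \<in> A \<Longrightarrow> q \<in> A \<Longrightarrow> p \<noteq> q \<Longrightarrow> v (\<sigma> p) (\<sigma> q) = v p q"
  shows "indirect A v a b \<le> indirect A v (\<sigma> a) (\<sigma> b)"
proof -
  obtain ps where "ps \<in> paths A a b" "path_min v ps = indirect A v a b"
    using indirect_attained[OF assms(1-4)] .
  then show ?thesis
    using map_paths[of ps A a b \<sigma> v] assms(5-7) path_min_le_indirect[OF assms(1)] by metis
qed

section \<open>Consequences of an admissible order\<close>

lemma precE:
  assumes "prec xs x y"
  obtains i j where "i < j" "j < length xs" "xs ! i = x" "xs ! j = y"
  using assms unfolding prec_def by blast

locale admissible =
  fixes A :: "'a set" and v :: "'a \<Rightarrow> 'a \<Rightarrow> real" and xs :: "'a list"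
  assumes admissible: "admissible_order A v xs"
begin

abbreviation entry :: "nat \<Rightarrow> nat \<Rightarrow> real" where
  "entry i j \<equiv> v (xs ! i) (xs ! j)"

lemma distinct_xs: "distinct xs" and set_xs: "set xs = A"
  using admissible unfolding admissible_order_def by auto

lemma prec_nth_iff:
  assumes "i < length xs" "j < length xs"
  shows "prec xs (xs ! i) (xs ! j) \<longleftrightarrow> i < j"
  using assms distinct_xs unfolding prec_def by (auto simp: nth_eq_iff_index_eq)

lemma prec_total:
  assumes "x \<in> A" "y \<in> A" "x \<noteq> y"
  shows "prec xs x y \<or> prec xs y x"
proof -
  obtain i j where "i < length xs" "j < length xs" "xs ! i = x" "xs ! j = y"
    using assms(1,2) set_xs by (metis in_set_conv_nth)
  with assms(3) show ?thesis
    by (metis linorder_neqE_nat prec_nth_iff)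
qed

lemma prec_le: "prec xs x y \<Longrightarrow> v y x \<le> v x y"
  using admissible unfolding admissible_order_def by blast

lemma entry_le: "i < j \<Longrightarrow> j < length xs \<Longrightarrow> entry j i \<le> entry i j"
  by (simp add: prec_le prec_nth_iff)

lemma entry_max:
  "i < j \<Longrightarrow> j < k \<Longrightarrow> k < length xs \<Longrightarrow> entry i k = max (entry i j) (entry j k)"
  using admissible unfolding admissible_order_def by (simp add: prec_nth_iff)

lemma entry_min:
  "i < j \<Longrightarrow> j < k \<Longrightarrow> k < length xs \<Longrightarrow> entry k i = min (entry k j) (entry j i)"
  using admissible unfolding admissible_order_def by (simp add: prec_nth_iff)

lemma turnout_succ:
  assumes "Suc i < length xs" "k < length xs" "k \<noteq> i" "k \<noteq> Suc i"
  shows "entry (Suc i) k + entry k (Suc i) \<le> entry i k + entry k i"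
    and "entry i k + entry k i - (entry (Suc i) k + entry k (Suc i))
           \<le> entry i (Suc i) - entry (Suc i) i"
proof -
  have "succ xs (xs ! i) (xs ! Suc i)"
    using assms(1) unfolding succ_def by blast
  moreover have "xs ! k \<in> A" "xs ! k \<notin> {xs ! i, xs ! Suc i}"
    using assms set_xs distinct_xs by (auto simp: nth_eq_iff_index_eq)
  moreover have "0 \<le> turnout v x z - turnout v x' z \<and> turnout v x z - turnout v x' z \<le> margin v x x'"
    if "succ xs x x'" "z \<in> A" "z \<notin> {x, x'}" for x x' z
    using admissible that unfolding admissible_order_def by blast
  ultimately have "0 \<le> turnout v (xs ! i) (xs ! k) - turnout v (xs ! Suc i) (xs ! k)
      \<and> turnout v (xs ! i) (xs ! k) - turnout v (xs ! Suc i) (xs ! k) \<le> margin v (xs ! i) (xs ! Suc i)"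
    by blast
  then show "entry (Suc i) k + entry k (Suc i) \<le> entry i k + entry k i"
    and "entry i k + entry k i - (entry (Suc i) k + entry k (Suc i))
           \<le> entry i (Suc i) - entry (Suc i) i"
    unfolding turnout_def margin_def by linarith+
qed

lemma entry_mono_succ:
  assumes "Suc i < length xs" "k < length xs" "k \<noteq> i" "k \<noteq> Suc i"
  shows "entry (Suc i) k \<le> entry i k \<and> entry k i \<le> entry k (Suc i)"
proof (cases "Suc i < k")
  case True
  then show ?thesis using entry_max[of i "Suc i" k] entry_min[of i "Suc i" k] assms by simp
next
  case False
  then have "k < i" using assms by simp
  then show ?thesis using entry_max[of k i "Suc i"] entry_min[of k i "Suc i"] assms by simp
qed

lemma entry_mono_across:
  assumes "Suc (Suc i) < length xs"
  shows "entry (Suc (Suc i)) (Suc i) \<le> entry i (Suc i) \<and> entry (Suc i) i \<le> entry (Suc i) (Suc (Suc i))"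
proof -
  have arith: "r \<le> p \<and> s \<le> q"
    if "a = max p q" "d = min r s" "s \<le> p" "r \<le> q" "q + r \<le> a + d" "s + p - (d + a) \<le> q - r"
    for a d p q r s :: real
    using that by (simp add: max_def min_def split: if_splits)
  show ?thesis
  proof (rule arith)
    show "entry i (Suc (Suc i)) = max (entry i (Suc i)) (entry (Suc i) (Suc (Suc i)))"
      and "entry (Suc (Suc i)) i = min (entry (Suc (Suc i)) (Suc i)) (entry (Suc i) i)"
      using entry_max[of i "Suc i" "Suc (Suc i)"] entry_min[of i "Suc i" "Suc (Suc i)"] assms
      by simp_all
    show "entry (Suc i) i \<le> entry i (Suc i)"
      and "entry (Suc (Suc i)) (Suc i) \<le> entry (Suc i) (Suc (Suc i))"
      using entry_le assms by simp_all
    show "entry (Suc i) (Suc (Suc i)) + entry (Suc (Suc i)) (Suc i)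
        \<le> entry i (Suc (Suc i)) + entry (Suc (Suc i)) i"
      using turnout_succ(1)[of i "Suc (Suc i)"] assms by simp
    show "entry (Suc i) i + entry i (Suc i) - (entry (Suc (Suc i)) i + entry i (Suc (Suc i)))
        \<le> entry (Suc i) (Suc (Suc i)) - entry (Suc (Suc i)) (Suc i)"
      using turnout_succ(2)[of "Suc i" i] assms by simp
  qed
qed

lemma entry_mono_same_side:
  assumes "i \<le> j" "j < length xs" "k < length xs" "j < k \<or> k < i"
  shows "entry j k \<le> entry i k \<and> entry k i \<le> entry k j"
  using assms
proof (induction j rule: dec_induct)
  case base
  then show ?case by simp
next
  case (step n)
  then have "entry n k \<le> entry i k \<and> entry k i \<le> entry k n"
    by (metis Suc_lessD)
  moreover have "entry (Suc n) k \<le> entry n k \<and> entry k n \<le> entry k (Suc n)"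
    using step.prems step.hyps by (intro entry_mono_succ) auto
  ultimately show ?case by (meson order_trans)
qed

lemma entry_mono:
  assumes "i < j" "j < length xs" "k < length xs" "k \<noteq> i" "k \<noteq> j"
  shows "entry j k \<le> entry i k \<and> entry k i \<le> entry k j"
proof (cases "i < k \<and> k < j")
  case True
  then obtain p where p: "k = Suc p" "i \<le> p"
    by (metis gr_implies_not0 not0_implies_Suc less_Suc_eq_le)
  have "entry j k \<le> entry (Suc k) k \<and> entry k (Suc k) \<le> entry k j"
    using entry_mono_same_side[of "Suc k" j k] True assms by simp
  moreover have "entry (Suc k) k \<le> entry p k \<and> entry k p \<le> entry k (Suc k)"
    using entry_mono_across[of p] True assms p by simp
  moreover have "entry p k \<le> entry i k \<and> entry k i \<le> entry k p"
    using entry_mono_same_side[of i p k] True assms p by simp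
  ultimately show ?thesis by (meson order_trans)
next
  case False
  then show ?thesis using entry_mono_same_side[of i j k] assms by auto
qed

lemma prec_mem:
  assumes "prec xs x y"
  shows "x \<in> A" "y \<in> A" "x \<noteq> y"
  using assms set_xs distinct_xs unfolding prec_def by (auto simp: nth_eq_iff_index_eq)

lemma prec_mono:
  assumes "prec xs x y" "z \<in> A" "z \<noteq> x" "z \<noteq> y"
  shows "v y z \<le> v x z \<and> v z x \<le> v z y"
proof -
  obtain i j where "i < j" "j < length xs" "xs ! i = x" "xs ! j = y"
    using assms(1) by (rule precE)
  moreover obtain k where "k < length xs" "xs ! k = z"
    using assms(2) set_xs by (metis in_set_conv_nth)
  ultimately show ?thesis
    using entry_mono[of i j k] assms(3,4) by auto
qed

lemma tie_succ:
  assumes "Suc i < length xs" "entry i (Suc i) = entry (Suc i) i"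
    "k < length xs" "k \<noteq> i" "k \<noteq> Suc i"
  shows "entry i k = entry (Suc i) k \<and> entry k i = entry k (Suc i)"
proof -
  have arith: "a = b \<and> d = e"
    if "a = max s b" "d = min e s" "e \<le> b" "a + d = b + e" for a b d e s :: real
    using that by (simp add: max_def min_def split: if_splits)
  have turnout_eq: "entry i k + entry k i = entry (Suc i) k + entry k (Suc i)"
    using turnout_succ[OF assms(1,3-5)] assms(2) by linarith
  show ?thesis
  proof (cases "Suc i < k")
    case True
    show ?thesis
    proof (rule arith)
      show "entry i k = max (entry (Suc i) i) (entry (Suc i) k)"
        using entry_max[of i "Suc i" k] True assms by simp
      show "entry k i = min (entry k (Suc i)) (entry (Suc i) i)"
        using entry_min[of i "Suc i" k] True assms by simp
      show "entry k (Suc i) \<le> entry (Suc i) k"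
        using entry_le[of "Suc i" k] True assms by simp
    qed (use turnout_eq in simp)
  next
    case False
    then have "k < i" using assms by simp
    have "entry k (Suc i) = entry k i \<and> entry (Suc i) k = entry i k"
    proof (rule arith)
      show "entry k (Suc i) = max (entry i (Suc i)) (entry k i)"
        using entry_max[of k i "Suc i"] \<open>k < i\<close> assms by (simp add: max.commute)
      show "entry (Suc i) k = min (entry i k) (entry i (Suc i))"
        using entry_min[of k i "Suc i"] \<open>k < i\<close> assms by (simp add: min.commute)
      show "entry i k \<le> entry k i"
        using entry_le[of k i] \<open>k < i\<close> assms by simp
    qed (use turnout_eq in simp)
    then show ?thesis by simp
  qed
qed

lemma tie_nth:
  assumes "Suc i \<le> j" "j < length xs" "entry i j = entry j i"
    "k < length xs" "k \<noteq> i" "k \<noteq> j"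
  shows "entry i k = entry j k \<and> entry k i = entry k j"
  using assms(1-4,6)
proof (induction j rule: dec_induct)
  case base
  then show ?case using tie_succ assms(5) by blast
next
  case (step n)
  have all_eq: "a = b \<and> b = c \<and> c = d"
    if "max a b = min c d" "d \<le> a" "c \<le> b" for a b c d :: real
    using that by (simp add: max_def min_def split: if_splits)
  have "entry i n = entry n (Suc n) \<and> entry n (Suc n) = entry (Suc n) n \<and> entry (Suc n) n = entry n i"
  proof (rule all_eq)
    show "max (entry i n) (entry n (Suc n)) = min (entry (Suc n) n) (entry n i)"
      using entry_max[of i n "Suc n"] entry_min[of i n "Suc n"] step by simp
    show "entry n i \<le> entry i n" "entry (Suc n) n \<le> entry n (Suc n)"
      using entry_le step by simp_all
  qed
  then have tie_left: "entry i n = entry n i" and tie_right: "entry n (Suc n) = entry (Suc n) n"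
    and cross: "entry i n = entry (Suc n) n" "entry n i = entry n (Suc n)"
    by simp_all
  show ?case
  proof (cases "k = n")
    case True
    then show ?thesis using cross by simp
  next
    case False
    then show ?thesis
      using step.IH tie_left tie_succ[of n k] tie_right step by simp
  qed
qed

lemma tie_twins:
  assumes "x \<in> A" "y \<in> A" "x \<noteq> y" "v x y = v y x" "z \<in> A" "z \<noteq> x" "z \<noteq> y"
  shows "v x z = v y z \<and> v z x = v z y"
proof -
  have tie: "v a z = v b z \<and> v z a = v z b"
    if ab: "prec xs a b" "v a b = v b a" "z \<noteq> a" "z \<noteq> b" for a b
  proof -
    obtain i j where ij: "i < j" "j < length xs" "xs ! i = a" "xs ! j = b"
      using ab(1) by (rule precE)
    obtain k where k: "k < length xs" "xs ! k = z"
      using assms(5) set_xs by (metis in_set_conv_nth)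
    have "k \<noteq> i" "k \<noteq> j"
      using ij k ab(3,4) by auto
    with ij k ab(2) show ?thesis
      using tie_nth[of i j k] by (simp add: Suc_le_eq)
  qed
  from prec_total[OF assms(1-3)] show ?thesis
  proof
    assume "prec xs x y"
    then show ?thesis using tie[of x y] assms(4,6,7) by simp
  next
    assume "prec xs y x"
    then show ?thesis using tie[of y x] assms(4,6,7) by simp
  qed
qed

lemma strict_prefers_prec:
  assumes "x \<in> A" "y \<in> A" "x \<noteq> y" "v y x < v x y"
  shows "prec xs x y"
  using prec_total[OF assms(1-3)] prec_le[of y x] assms(4) by auto

lemma prefers_mono:
  assumes "x \<in> A" "y \<in> A" "x \<noteq> y" "v y x \<le> v x y" "z \<in> A" "z \<noteq> x" "z \<noteq> y"
  shows "v y z \<le> v x z \<and> v z x \<le> v z y"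
proof (cases "v y x = v x y")
  case True
  then show ?thesis using tie_twins[OF assms(1-3) _ assms(5-7)] by simp
next
  case False
  then have "prec xs x y" using strict_prefers_prec assms(1-4) by simp
  then show ?thesis using prec_mono assms(5-7) by blast
qed

lemma finite_A: "finite A"
  using set_xs by auto

lemma row_sum_diff_ge:
  assumes "prec xs x y"
  shows "v x y - v y x \<le> row_sum A v x - row_sum A v y"
proof -
  have "0 \<le> (\<Sum>z\<in>A - {x, y}. v x z - v y z)"
    using prec_mono[OF assms] by (intro sum_nonneg) auto
  then show ?thesis
    using row_sum_diff[OF finite_A prec_mem[OF assms], of v] by linarith
qed

lemma row_sum_eq_of_tie:
  assumes "x \<in> A" "y \<in> A" "x \<noteq> y" "v x y = v y x"
  shows "row_sum A v x = row_sum A v y"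
proof -
  have "(\<Sum>z\<in>A - {x, y}. v x z - v y z) = 0"
    using tie_twins[OF assms] by (intro sum.neutral) auto
  then show ?thesis
    using row_sum_diff[OF finite_A assms(1-3), of v] assms(4) by linarith
qed

lemma row_sum_less_iff:
  assumes "x \<in> A" "y \<in> A" "x \<noteq> y"
  shows "row_sum A v y < row_sum A v x \<longleftrightarrow> v y x < v x y"
proof
  assume "v y x < v x y"
  then show "row_sum A v y < row_sum A v x"
    using row_sum_diff_ge[OF strict_prefers_prec[OF assms]] by linarith
next
  assume less: "row_sum A v y < row_sum A v x"
  show "v y x < v x y"
  proof (rule ccontr)
    assume "\<not> v y x < v x y"
    then consider "v x y = v y x" | "v x y < v y x" by linarith
    then show False
    proof cases
      case 1
      then show False using row_sum_eq_of_tie[OF assms] less by simp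
    next
      case 2
      then have "prec xs y x" using strict_prefers_prec assms by simp
      then show False using row_sum_diff_ge[of y x] 2 less by linarith
    qed
  qed
qed

section \<open>The top dominant component\<close>

lemma tie_indirect_le:
  assumes "x \<in> A" "y \<in> A" "x \<noteq> y" "v x y = v y x"
  shows "indirect A v x y \<le> indirect A v y x"
proof -
  let ?\<tau> = "Transposition.transpose x y"
  have twins: "v x z = v y z" "v z x = v z y" if "z \<in> A" "z \<noteq> x" "z \<noteq> y" for z
    using tie_twins[OF assms that] by simp_all
  have automorphism: "v (?\<tau> p) (?\<tau> q) = v p q" if pq: "p \<in> A" "q \<in> A" "p \<noteq> q" for p q
  proof -
    consider "p = x" "q = y" | "p = y" "q = x" | "p \<in> {x, y}" "q \<notin> {x, y}"
      | "p \<notin> {x, y}" "q \<in> {x, y}" | "p \<notin> {x, y}" "q \<notin> {x, y}"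
      using pq(3) by blast
    then show ?thesis
    proof cases
      case 3
      then have "v x q = v y q" "v q x = v q y" using twins[OF pq(2)] by simp_all
      with 3 show ?thesis by auto
    next
      case 4
      then have "v x p = v y p" "v p x = v p y" using twins[OF pq(1)] by simp_all
      with 4 show ?thesis by auto
    qed (use assms(4) in auto)
  qed
  have "indirect A v x y \<le> indirect A v (?\<tau> x) (?\<tau> y)"
    using automorphism assms(1,2) by (intro indirect_le_map[OF finite_A assms(1-3)]) auto
  then show ?thesis by simp
qed

lemma top_component_prefers:
  assumes "llull_matrix A v" "top_dominant_component A v X" "x \<in> X" "y \<in> A" "y \<notin> X"
  shows "v y x < v x y"
proof -
  have "X \<in> A // irred_rel A v"
    using assms(2) unfolding top_dominant_component_def irred_components_def by simp
  then have "X \<subseteq> A"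
    unfolding quotient_def irred_rel_def by auto
  with assms(3-5) have x: "x \<in> A" "x \<noteq> y" by auto
  let ?Y = "irred_rel A v `` {y}"
  have "?Y \<in> irred_components A v"
    unfolding irred_components_def using assms(4) by (rule quotientI)
  moreover have "y \<in> ?Y"
    unfolding irred_rel_def using assms(4) by simp
  ultimately have "comp_dominates A v X ?Y"
    using assms(2,5)
    unfolding top_dominant_component_def by auto
  with assms(3) \<open>y \<in> ?Y\<close> have xy: "indirect A v x y > 0" and yx: "indirect A v y x = 0"
    unfolding comp_dominates_def dominates_def by auto
  have "0 \<le> v x y" "0 \<le> v y x"
    using assms(1,4) x unfolding llull_matrix_def by auto
  moreover have "v y x \<le> 0"
    using le_indirect[OF finite_A assms(4) x(1), of v] x(2) yx by simp
  moreover have "v x y \<noteq> v y x"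
    using tie_indirect_le[OF x(1) assms(4) x(2)] xy yx by auto
  ultimately show ?thesis by linarith
qed

end

theorem lemma3p4:
  fixes A :: "'a set" and v :: "'a \<Rightarrow> 'a \<Rightarrow> real" and xs :: "'a list" and X :: "'a set"
  assumes "finite A" and "card A \<ge> 2"
    and "llull_matrix A v"
    and "has_CLC A v"
    and "\<exists>x\<in>A. \<exists>y\<in>A. x \<noteq> y \<and> v x y \<noteq> 0"
    and "admissible_order A v xs"
    and "top_dominant_component A v X"
  shows "\<forall>x\<in>A. \<forall>y\<in>A. x \<noteq> y \<longrightarrow>
     (prec xs x y \<longrightarrow> mean_score A v x \<ge> mean_score A v y) \<and>
     (mean_score A v x = mean_score A v y \<longleftrightarrow> v x y = v y x) \<and>
     (mean_score A v x \<ge> mean_score A v y \<longrightarrow>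
        v x y \<ge> v y x \<and> (\<forall>z\<in>A. z \<notin> {x, y} \<longrightarrow> v x z \<ge> v y z \<and> v z x \<le> v z y)) \<and>
     (mean_score A v x > mean_score A v y \<longleftrightarrow> v x y > v y x) \<and>
     (v x y > v y x \<longrightarrow> prec xs x y) \<and>
     (x \<in> X \<and> y \<notin> X \<longrightarrow> mean_score A v x > mean_score A v y)"
proof -
  \<comment> \<open>Finiteness, CLC structure and non-vanishing only serve to provide \<open>xs\<close> and \<open>X\<close>.\<close>
  interpret admissible A v xs
    using assms(6) by (rule admissible.intro)
  have score_less_iff: "mean_score A v y < mean_score A v x \<longleftrightarrow> v y x < v x y"
    if "x \<in> A" "y \<in> A" "x \<noteq> y" for x y
    using mean_score_less_iff[OF assms(2)] row_sum_less_iff[OF that] by simp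
  have score_eq_iff: "mean_score A v x = mean_score A v y \<longleftrightarrow> v x y = v y x"
    if "x \<in> A" "y \<in> A" "x \<noteq> y" for x y
    using score_less_iff[OF that] score_less_iff[OF that(2,1) that(3)[symmetric]]
    by (metis linorder_neq_iff)
  have top_prefers: "v y x < v x y" if "x \<in> X" "y \<in> A" "y \<notin> X" for x y
    using top_component_prefers[OF assms(3,7) that] .
  show ?thesis
    using score_less_iff score_eq_iff prec_le strict_prefers_prec prefers_mono top_prefers
    by (auto simp: not_less[symmetric])
qed

end
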